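(* Let $b_x,b_y,u_x,u_y,K,\beta,e$ be positive constants with $u_y>u_x$ and $b_x\geq b_y+e$, and consider the system \[ \frac{dX}{dt}=\Big[b_x\Big(1-\frac{X+Y}{K}\Big)-u_x-\beta Y\Big]X+e\Big(1-\frac{X+Y}{K}\Big)Y,\qquad \frac{dY}{dt}=\Big[b_y\Big(1-\frac{X+Y}{K}\Big)-u_y+\beta X\Big]Y . \] Let $E_0=(0,0)$, $E_1=(\bar X,0)$ with $\bar X=K(1-u_x/b_x)$, and $E^*=(X^*,Y^* )$ with \[ X^*=\frac{-B+\sqrt{B^2-4AC}}{2A},\qquad Y^*=\frac{(\beta K-b_y)X^*}{b_y}+\frac{K(b_y-u_y)}{b_y}, \] where \[ A=\frac{\beta K}{b_y^2}\{b_y(b_x-b_y-e)+\beta K(b_y+e)\}, \] \[ B=-K(b_x-u_x)+K(b_x+\beta K+e)\frac{b_y-u_y}{b_y}+2eK\frac{(\beta K-b_y)(b_y-u_y)}{b_y^2}-\frac{eK(\beta K-b_y)}{b_y}, \] \[ C=-\frac{eK^2(b_y-u_y)u_y}{b_y^2}. \] Define $V_0=\frac{b_y}{b_x}\frac{u_x}{u_y}$, $H_0=\frac{\beta}{u_y}K\left(1-\frac{u_x}{b_x}\right)$ and $R_0=V_0+H_0$. Then: (i) $E_0$ is locally asymptotically stable if $b_x<u_x$ and $b_y<u_y$; (ii) if $b_x>u_x$, then $E_1$ is locally asymptotically stable when $R_0<1$ and unstable when $R_0>1$; (iii) $E^*$ is locally asymptotically stable if $b_x>u_x$, $b_y>u_y$,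 $b_y>\beta K$ and $\frac{K}{X^*}>\frac{b_y-\beta K}{b_y-u_y}$.
   Context: $X$ and $Y$ denote densities of uninfected and infected hosts; $b_x,b_y$ are birth rates, $u_x,u_y$ death rates, $K$ carrying capacity, $\beta$ the horizontal transmission coefficient, and $e$ the rate at which infected hosts produce uninfected offspring. The paper assumes throughout that $u_y>u_x$ and $b_x\geq b_y+e$. Local asymptotic stability of an equilibrium is in the usual sense for ODEs (both eigenvalues of the Jacobian at the equilibrium have negative real part). *)

theory Defs
  imports "HOL-Analysis.Analysis"
begin

definition dXdt :: "real \<Rightarrow> real \<Rightarrow> real \<Rightarrow> real \<Rightarrow> real \<Rightarrow> real \<Rightarrow> real \<Rightarrow> real \<Rightarrow> real \<Rightarrow> real" where
  "dXdt b_x b_y u_x u_y K beta e X Y =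
     (b_x * (1 - (X + Y) / K) - u_x - beta * Y) * X + e * (1 - (X + Y) / K) * Y"

definition dYdt :: "real \<Rightarrow> real \<Rightarrow> real \<Rightarrow> real \<Rightarrow> real \<Rightarrow> real \<Rightarrow> real \<Rightarrow> real \<Rightarrow> real \<Rightarrow> real" where
  "dYdt b_x b_y u_x u_y K beta e X Y =
     (b_y * (1 - (X + Y) / K) - u_y + beta * X) * Y"

definition jac :: "(real \<Rightarrow> real \<Rightarrow> real) \<Rightarrow> (real \<Rightarrow> real \<Rightarrow> real) \<Rightarrow> real \<Rightarrow> real \<Rightarrow> real ^ 2 ^ 2" where
  "jac F G p q = (\<chi> i j.
     if i = 1 then (if j = 1 then deriv (\<lambda>x. F x q) p else deriv (\<lambda>y. F p y) q)
     else (if j = 1 then deriv (\<lambda>x. G x q) p else deriv (\<lambda>y. G p y) q))"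

definition eigenvalue2 :: "real ^ 2 ^ 2 \<Rightarrow> complex \<Rightarrow> bool" where
  "eigenvalue2 M l \<longleftrightarrow>
     (complex_of_real (M $ 1 $ 1) - l) * (complex_of_real (M $ 2 $ 2) - l)
       - complex_of_real (M $ 1 $ 2) * complex_of_real (M $ 2 $ 1) = 0"

definition is_equilibrium :: "(real \<Rightarrow> real \<Rightarrow> real) \<Rightarrow> (real \<Rightarrow> real \<Rightarrow> real) \<Rightarrow> real \<Rightarrow> real \<Rightarrow> bool" where
  "is_equilibrium F G p q \<longleftrightarrow> F p q = 0 \<and> G p q = 0"

definition loc_asym_stable :: "(real \<Rightarrow> real \<Rightarrow> real) \<Rightarrow> (real \<Rightarrow> real \<Rightarrow> real) \<Rightarrow> real \<Rightarrow> real \<Rightarrow> bool" where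
  "loc_asym_stable F G p q \<longleftrightarrow> is_equilibrium F G p q \<and>
     (\<forall>l. eigenvalue2 (jac F G p q) l \<longrightarrow> Re l < 0)"

definition unstable :: "(real \<Rightarrow> real \<Rightarrow> real) \<Rightarrow> (real \<Rightarrow> real \<Rightarrow> real) \<Rightarrow> real \<Rightarrow> real \<Rightarrow> bool" where
  "unstable F G p q \<longleftrightarrow> is_equilibrium F G p q \<and>
     (\<exists>l. eigenvalue2 (jac F G p q) l \<and> Re l > 0)"


definition coefA :: "real \<Rightarrow> real \<Rightarrow> real \<Rightarrow> real \<Rightarrow> real \<Rightarrow> real \<Rightarrow> real \<Rightarrow> real" where
  "coefA b_x b_y u_x u_y K beta e =
     beta * K / b_y\<^sup>2 * (b_y * (b_x - b_y - e) + beta * K * (b_y + e))"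

definition coefB :: "real \<Rightarrow> real \<Rightarrow> real \<Rightarrow> real \<Rightarrow> real \<Rightarrow> real \<Rightarrow> real \<Rightarrow> real" where
  "coefB b_x b_y u_x u_y K beta e =
     - K * (b_x - u_x) + K * (b_x + beta * K + e) * ((b_y - u_y) / b_y)
     + 2 * e * K * ((beta * K - b_y) * (b_y - u_y) / b_y\<^sup>2) - e * K * (beta * K - b_y) / b_y"

definition coefC :: "real \<Rightarrow> real \<Rightarrow> real \<Rightarrow> real \<Rightarrow> real \<Rightarrow> real \<Rightarrow> real \<Rightarrow> real" where
  "coefC b_x b_y u_x u_y K beta e = - (e * K\<^sup>2 * (b_y - u_y) * u_y / b_y\<^sup>2)"

definition Xstar :: "real \<Rightarrow> real \<Rightarrow> real \<Rightarrow> real \<Rightarrow> real \<Rightarrow> real \<Rightarrow> real \<Rightarrow> real" where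
  "Xstar b_x b_y u_x u_y K beta e =
     (let A = coefA b_x b_y u_x u_y K beta e; B = coefB b_x b_y u_x u_y K beta e;
          C = coefC b_x b_y u_x u_y K beta e
      in (- B + sqrt (B\<^sup>2 - 4 * A * C)) / (2 * A))"

definition Ystar :: "real \<Rightarrow> real \<Rightarrow> real \<Rightarrow> real \<Rightarrow> real \<Rightarrow> real \<Rightarrow> real \<Rightarrow> real" where
  "Ystar b_x b_y u_x u_y K beta e =
     (beta * K - b_y) * Xstar b_x b_y u_x u_y K beta e / b_y + K * (b_y - u_y) / b_y"

definition Xbar :: "real \<Rightarrow> real \<Rightarrow> real \<Rightarrow> real" where
  "Xbar b_x u_x K = K * (1 - u_x / b_x)"

definition V0 :: "real \<Rightarrow> real \<Rightarrow> real \<Rightarrow> real \<Rightarrow> real" where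
  "V0 b_x b_y u_x u_y = (b_y / b_x) * (u_x / u_y)"

definition H0 :: "real \<Rightarrow> real \<Rightarrow> real \<Rightarrow> real \<Rightarrow> real \<Rightarrow> real" where
  "H0 b_x u_x u_y K beta = (beta / u_y) * K * (1 - u_x / b_x)"

definition R0 :: "real \<Rightarrow> real \<Rightarrow> real \<Rightarrow> real \<Rightarrow> real \<Rightarrow> real \<Rightarrow> real" where
  "R0 b_x b_y u_x u_y K beta = V0 b_x b_y u_x u_y + H0 b_x u_x u_y K beta"

end

theory Submission imports Defs begin

(* At E0 and E1 the entry
   d(dY/dt)/dX vanishes because Y = 0, so the eigenvalues are the diagonal entries; at E1 the
   second one is u_y (R0 - 1). E* lies on the line where dY/dt = 0, and substituting that
   line into dX/dt = 0 gives the quadratic A X^2 + B X + C = 0 with A > 0 > C, of which X*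
   is the positive root. At any interior equilibrium the free space S = 1 - (X + Y)/K is
   positive (otherwise dX/dt < 0), and the equilibrium equations turn the diagonal entries
   into negative quantities and the determinant into a sum of positive terms, so both
   eigenvalues have negative real part (Routh-Hurwitz for 2x2). *)

lemma eigenvalue2_triangular:
  assumes "M $ 2 $ 1 = 0"
  shows "eigenvalue2 M l \<longleftrightarrow> l = complex_of_real (M $ 1 $ 1) \<or> l = complex_of_real (M $ 2 $ 2)"
  using assms unfolding eigenvalue2_def by auto

lemma Re_eigenvalue2_neg:
  assumes "eigenvalue2 M l"
    and trace: "M $ 1 $ 1 + M $ 2 $ 2 < 0"
    and det: "M $ 1 $ 1 * M $ 2 $ 2 - M $ 1 $ 2 * M $ 2 $ 1 > 0"
  shows "Re l < 0"
proof -
  define a b c d where "a = M $ 1 $ 1" "b = M $ 1 $ 2" "c = M $ 2 $ 1" "d = M $ 2 $ 2"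
  define x y where "x = Re l" "y = Im l"
  have char: "(complex_of_real a - l) * (complex_of_real d - l) - complex_of_real b * complex_of_real c = 0"
    using assms(1) unfolding eigenvalue2_def a_b_c_d_def .
  have re: "x * x - (a + d) * x + (a * d - b * c) = y * y"
    using arg_cong[OF char, of Re] unfolding x_y_def by (simp add: algebra_simps)
  have im: "y * (a + d - 2 * x) = 0"
    using arg_cong[OF char, of Im] unfolding x_y_def by (simp add: algebra_simps)
  have "a + d < 0" "a * d - b * c > 0"
    using trace det unfolding a_b_c_d_def by auto
  show ?thesis
  proof (cases "y = 0")
    case True
    have "x \<ge> 0 \<Longrightarrow> x * x - (a + d) * x + (a * d - b * c) > 0"
      using \<open>a + d < 0\<close> \<open>a * d - b * c > 0\<close>
      by (smt (verit) mult_nonneg_nonneg mult_nonpos_nonneg)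
    with re True show ?thesis unfolding x_y_def by force
  next
    case False
    with im have "x = (a + d) / 2" by simp
    with \<open>a + d < 0\<close> show ?thesis unfolding x_y_def by simp
  qed
qed

lemma loc_asym_stable_triangular:
  assumes "is_equilibrium F G p q" "jac F G p q $ 2 $ 1 = 0"
    and "jac F G p q $ 1 $ 1 < 0" "jac F G p q $ 2 $ 2 < 0"
  shows "loc_asym_stable F G p q"
  using assms unfolding loc_asym_stable_def by (auto simp: eigenvalue2_triangular)

lemma unstable_triangular:
  assumes "is_equilibrium F G p q" "jac F G p q $ 2 $ 1 = 0" "jac F G p q $ 2 $ 2 > 0"
  shows "unstable F G p q"
  using assms unfolding unstable_def by (auto simp: eigenvalue2_triangular)

lemma loc_asym_stable_trace_det:
  assumes "is_equilibrium F G p q"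
    and "jac F G p q $ 1 $ 1 + jac F G p q $ 2 $ 2 < 0"
    and "jac F G p q $ 1 $ 1 * jac F G p q $ 2 $ 2 - jac F G p q $ 1 $ 2 * jac F G p q $ 2 $ 1 > 0"
  shows "loc_asym_stable F G p q"
  using assms Re_eigenvalue2_neg unfolding loc_asym_stable_def by blast

lemma quadratic_positive_root:
  fixes A B C :: real
  assumes "A > 0" "C < 0"
  defines "x \<equiv> (- B + sqrt (B\<^sup>2 - 4 * A * C)) / (2 * A)"
  shows "x > 0" and "A * x\<^sup>2 + B * x + C = 0"
proof -
  define s where "s = sqrt (B\<^sup>2 - 4 * A * C)"
  have "A * C < 0" using assms by (simp add: mult_pos_neg)
  then have disc: "B\<^sup>2 - 4 * A * C > B\<^sup>2" by simp
  then have s2: "s\<^sup>2 = B\<^sup>2 - 4 * A * C" unfolding s_def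
    by (smt (verit) real_sqrt_pow2 zero_le_power2)
  have "s \<ge> 0" unfolding s_def using disc by (smt (verit) real_sqrt_ge_zero zero_le_power2)
  with s2 disc have "s > \<bar>B\<bar>"
    by (metis power2_abs power_less_imp_less_base)
  then show "x > 0" unfolding x_def s_def[symmetric] using \<open>A > 0\<close> by simp
  have "2 * A * x + B = s" unfolding x_def s_def[symmetric] using \<open>A > 0\<close> by (simp add: field_simps)
  then have "(2 * A * x + B)\<^sup>2 = B\<^sup>2 - 4 * A * C" using s2 by simp
  then have "4 * A * (A * x\<^sup>2 + B * x + C) = 0" by (simp add: algebra_simps power2_eq_square)
  then show "A * x\<^sup>2 + B * x + C = 0" using \<open>A > 0\<close> by simp
qed

locale host_model =
  fixes b_x b_y u_x u_y K beta e :: real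
  assumes pos: "b_x > 0" "b_y > 0" "u_x > 0" "u_y > 0" "K > 0" "beta > 0" "e > 0"
begin

abbreviation dX :: "real \<Rightarrow> real \<Rightarrow> real" where
  "dX \<equiv> dXdt b_x b_y u_x u_y K beta e"

abbreviation dY :: "real \<Rightarrow> real \<Rightarrow> real" where
  "dY \<equiv> dYdt b_x b_y u_x u_y K beta e"

lemma jac_entries:
  "jac dX dY p q $ 1 $ 1 = b_x * (1 - (p + q) / K) - u_x - beta * q - b_x * p / K - e * q / K"
  "jac dX dY p q $ 1 $ 2 = - b_x * p / K - beta * p + e * (1 - (p + q) / K) - e * q / K"
  "jac dX dY p q $ 2 $ 1 = (beta - b_y / K) * q"
  "jac dX dY p q $ 2 $ 2 = b_y * (1 - (p + q) / K) - u_y + beta * p - b_y * q / K"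
  unfolding jac_def dXdt_def[abs_def] dYdt_def[abs_def]
  by (simp; rule DERIV_imp_deriv; use pos in \<open>auto intro!: derivative_eq_intros simp: field_simps\<close>)+

lemma trivial_equilibrium_stable:
  assumes "b_x < u_x" "b_y < u_y"
  shows "loc_asym_stable dX dY 0 0"
proof (rule loc_asym_stable_triangular)
  show "is_equilibrium dX dY 0 0" unfolding is_equilibrium_def dXdt_def dYdt_def by simp
qed (use assms in \<open>simp_all add: jac_entries\<close>)

lemma free_space_Xbar: "1 - Xbar b_x u_x K / K = u_x / b_x"
  unfolding Xbar_def using pos by (simp add: field_simps)

lemma uninfected_equilibrium: "is_equilibrium dX dY (Xbar b_x u_x K) 0"
  unfolding is_equilibrium_def dXdt_def dYdt_def using pos free_space_Xbar by simp

lemma jac_uninfected_equilibrium: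
  "jac dX dY (Xbar b_x u_x K) 0 $ 1 $ 1 = - (b_x - u_x)"
  "jac dX dY (Xbar b_x u_x K) 0 $ 2 $ 1 = 0"
  "jac dX dY (Xbar b_x u_x K) 0 $ 2 $ 2 = u_y * (R0 b_x b_y u_x u_y K beta - 1)"
  using pos free_space_Xbar
  by (simp_all add: jac_entries Xbar_def R0_def V0_def H0_def field_simps)

lemma uninfected_equilibrium_stable:
  assumes "b_x > u_x" "R0 b_x b_y u_x u_y K beta < 1"
  shows "loc_asym_stable dX dY (Xbar b_x u_x K) 0"
  using assms pos uninfected_equilibrium
  by (intro loc_asym_stable_triangular) (simp_all add: jac_uninfected_equilibrium mult_pos_neg)

lemma uninfected_equilibrium_unstable:
  assumes "R0 b_x b_y u_x u_y K beta > 1"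
  shows "unstable dX dY (Xbar b_x u_x K) 0"
  using assms pos uninfected_equilibrium
  by (intro unstable_triangular) (simp_all add: jac_uninfected_equilibrium)

lemma free_space_pos_if_dXdt_zero:
  assumes "X > 0" "Y > 0" "dX X Y = 0"
  shows "1 - (X + Y) / K > 0"
proof (rule ccontr)
  define S where "S = 1 - (X + Y) / K"
  assume "\<not> S > 0"
  with pos assms have "(b_x * S - u_x - beta * Y) * X < 0"
    by (smt (verit) mult_nonneg_nonpos mult_neg_pos mult_pos_pos)
  moreover have "e * S * Y \<le> 0"
    using \<open>\<not> S > 0\<close> pos assms by (simp add: mult_nonpos_nonneg mult_nonneg_nonpos)
  ultimately show False using assms(3) unfolding dXdt_def S_def by simp
qed

lemma interior_equilibrium_stable:
  assumes eq: "is_equilibrium dX dY X Y" and "X > 0" "Y > 0"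
    and "b_y \<ge> beta * K" "b_x + beta * K \<ge> b_y"
  shows "loc_asym_stable dX dY X Y"
proof -
  define S where "S = 1 - (X + Y) / K"
  have "S > 0"
    using free_space_pos_if_dXdt_zero assms eq unfolding is_equilibrium_def S_def by blast
  have dX0: "b_x * S - u_x - beta * Y = - e * S * Y / X"
    using eq \<open>X > 0\<close> unfolding is_equilibrium_def dXdt_def S_def[symmetric] by (simp add: field_simps)
  have dY0: "b_y * S - u_y + beta * X = 0"
    using eq \<open>Y > 0\<close> unfolding is_equilibrium_def dYdt_def S_def[symmetric] by simp
  let ?J = "jac dX dY X Y"
  have J11: "?J $ 1 $ 1 = - e * S * Y / X - b_x * X / K - e * Y / K"
    and J12: "?J $ 1 $ 2 = - b_x * X / K - beta * X + e * S - e * Y / K"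
    and J21: "?J $ 2 $ 1 = (beta - b_y / K) * Y"
    and J22: "?J $ 2 $ 2 = - b_y * Y / K"
    unfolding jac_entries S_def[symmetric] using dX0 dY0 by simp_all
  have "e * S * Y / X > 0" "b_x * X / K > 0" "e * Y / K > 0" "b_y * Y / K > 0"
    using pos \<open>S > 0\<close> \<open>X > 0\<close> \<open>Y > 0\<close> by simp_all
  then have trace: "?J $ 1 $ 1 + ?J $ 2 $ 2 < 0" unfolding J11 J22 by simp
  have "?J $ 1 $ 1 * ?J $ 2 $ 2 - ?J $ 1 $ 2 * ?J $ 2 $ 1
      = Y / K * (b_y * e * S * Y / X + beta * X * (b_x + beta * K - b_y) + beta * e * Y
                 + (b_y - beta * K) * e * S)"
    unfolding J11 J12 J21 J22 using pos \<open>X > 0\<close> by (simp add: field_simps)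
  also have "\<dots> > 0"
    using pos assms \<open>S > 0\<close> by (intro mult_pos_pos add_pos_nonneg add_nonneg_pos) simp_all
  finally show ?thesis using eq trace by (intro loc_asym_stable_trace_det)
qed

abbreviation Y_nullcline :: "real \<Rightarrow> real" where
  "Y_nullcline X \<equiv> (beta * K - b_y) * X / b_y + K * (b_y - u_y) / b_y"

lemma dYdt_Y_nullcline: "dY X (Y_nullcline X) = 0"
  unfolding dYdt_def using pos by (simp add: field_simps)

lemma dXdt_Y_nullcline:
  "K * dX X (Y_nullcline X)
     = - (coefA b_x b_y u_x u_y K beta e * X\<^sup>2 + coefB b_x b_y u_x u_y K beta e * X
          + coefC b_x b_y u_x u_y K beta e)"
  using pos unfolding dXdt_def coefA_def coefB_def coefC_def
  by (simp add: field_simps power2_eq_square)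

lemma Xstar_positive_root:
  assumes "b_x \<ge> b_y + e" "b_y > u_y"
  shows "Xstar b_x b_y u_x u_y K beta e > 0"
    and "K * dX (Xstar b_x b_y u_x u_y K beta e) (Ystar b_x b_y u_x u_y K beta e) = 0"
proof -
  define A B C where "A = coefA b_x b_y u_x u_y K beta e" "B = coefB b_x b_y u_x u_y K beta e"
    "C = coefC b_x b_y u_x u_y K beta e"
  have "A > 0" unfolding A_B_C_def coefA_def
    using pos assms by (intro mult_pos_pos divide_pos_pos add_nonneg_pos) auto
  moreover have "C < 0" unfolding A_B_C_def coefC_def
    using pos assms by simp
  moreover have X: "Xstar b_x b_y u_x u_y K beta e = (- B + sqrt (B\<^sup>2 - 4 * A * C)) / (2 * A)"
    unfolding Xstar_def A_B_C_def Let_def ..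
  ultimately show "Xstar b_x b_y u_x u_y K beta e > 0"
    and "K * dX (Xstar b_x b_y u_x u_y K beta e) (Ystar b_x b_y u_x u_y K beta e) = 0"
    using quadratic_positive_root[of A C B]
    unfolding Ystar_def dXdt_Y_nullcline A_B_C_def[symmetric] X by simp_all
qed

lemma coexistence_equilibrium_stable:
  assumes "b_x \<ge> b_y + e" "b_y > u_y" "b_y > beta * K"
    and "K / Xstar b_x b_y u_x u_y K beta e > (b_y - beta * K) / (b_y - u_y)"
  shows "loc_asym_stable dX dY (Xstar b_x b_y u_x u_y K beta e) (Ystar b_x b_y u_x u_y K beta e)"
proof -
  let ?X = "Xstar b_x b_y u_x u_y K beta e" and ?Y = "Ystar b_x b_y u_x u_y K beta e"
  have "?X > 0" using Xstar_positive_root assms by blast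
  have "(b_y - beta * K) * ?X < K * (b_y - u_y)"
    using assms(2,4) \<open>?X > 0\<close> by (simp add: field_simps)
  then have "(beta * K - b_y) * ?X + K * (b_y - u_y) > 0" by (simp add: algebra_simps)
  then have "?Y > 0" unfolding Ystar_def add_divide_distrib[symmetric] using pos by simp
  have "is_equilibrium dX dY ?X ?Y"
    unfolding is_equilibrium_def using Xstar_positive_root(2)[OF assms(1,2)] pos dYdt_Y_nullcline
    by (simp add: Ystar_def)
  moreover have "b_x + beta * K \<ge> b_y" using assms(1) pos by (smt (verit) mult_pos_pos)
  ultimately show ?thesis
    using \<open>?X > 0\<close> \<open>?Y > 0\<close> assms(3) by (intro interior_equilibrium_stable) simp_all
qed

end

theorem theorem1:
  fixes b_x b_y u_x u_y K beta e :: real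
  assumes pos: "b_x > 0" "b_y > 0" "u_x > 0" "u_y > 0" "K > 0" "beta > 0" "e > 0"
    and huy: "u_y > u_x" and hbx: "b_x \<ge> b_y + e"
  shows "((b_x < u_x \<and> b_y < u_y) \<longrightarrow>
            loc_asym_stable (dXdt b_x b_y u_x u_y K beta e) (dYdt b_x b_y u_x u_y K beta e) 0 0)
       \<and> (b_x > u_x \<longrightarrow>
            ((R0 b_x b_y u_x u_y K beta < 1 \<longrightarrow>
                loc_asym_stable (dXdt b_x b_y u_x u_y K beta e) (dYdt b_x b_y u_x u_y K beta e)
                  (Xbar b_x u_x K) 0)
           \<and> (R0 b_x b_y u_x u_y K beta > 1 \<longrightarrow>
                unstable (dXdt b_x b_y u_x u_y K beta e) (dYdt b_x b_y u_x u_y K beta e)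
                  (Xbar b_x u_x K) 0)))
       \<and> ((b_x > u_x \<and> b_y > u_y \<and> b_y > beta * K \<and>
             K / Xstar b_x b_y u_x u_y K beta e > (b_y - beta * K) / (b_y - u_y))
            \<longrightarrow> loc_asym_stable (dXdt b_x b_y u_x u_y K beta e) (dYdt b_x b_y u_x u_y K beta e)
                  (Xstar b_x b_y u_x u_y K beta e) (Ystar b_x b_y u_x u_y K beta e))"
proof -
  interpret host_model b_x b_y u_x u_y K beta e using pos by unfold_locales
  show ?thesis
    using trivial_equilibrium_stable uninfected_equilibrium_stable
      uninfected_equilibrium_unstable coexistence_equilibrium_stable hbx
    by blast
qed

end
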